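(* Let $D$ be a knot diagram that is ascending from a base point $b$, and regard $D$ as a $(1,1)$-tangle diagram by moving $b$ to infinity via a planar isotopy of $S^2$. Then a Reidemeister I, II, or III move can be applied to every bounded $1$-, $2$-, or $3$-sided face of $D$, respectively.
   Context: An oriented knot diagram is ascending from a point $b$ (not a crossing) if, travelling along the knot from $b$ in the direction of the orientation, every crossing is first met along its under-strand and later along its over-strand. A $2$-sided face admits a Reidemeister II move when one of its edges is the over-strand at both its crossings; a $3$-sided face admits a Reidemeister III move when one of its edges is the over-strand at both of its crossings. *)

theory Defs
  imports Main
begin

text \<open>
Travelling along the knot we meet 2n crossing-visits, numbered 0..2n-1 in the
direction of the orientation; visit i lies at crossing cr i, and ov i says whether
at visit i we are on the over-strand.  Edge i runs from visit i to visit (i+1) mod 2n.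
Darts (half-edges) are pairs (i, s): (i, True) is the start of edge i at visit i,
(i, False) is the end of edge (i-1) mod 2n at visit i.  The planar embedding is given
by a rotation system rot (cyclic order of the four darts around each crossing);
faces are the orbits of the face-tracing permutation, and planarity (genus 0)
is the Euler condition  #faces = n + 2  (the curve is connected).
\<close>

type_synonym dart = "nat \<times> bool"

definition darts :: "nat \<Rightarrow> dart set" where
  "darts n = {d. fst d < 2 * n}"

definition opp :: "nat \<Rightarrow> dart \<Rightarrow> dart" where
  "opp n d = (if snd d then ((fst d + 1) mod (2 * n), False)
              else ((fst d + 2 * n - 1) mod (2 * n), True))"

definition face_step :: "nat \<Rightarrow> (dart \<Rightarrow> dart) \<Rightarrow> dart \<Rightarrow> dart" where
  "face_step n rot d = rot (opp n d)"

definition face_of :: "nat \<Rightarrow> (dart \<Rightarrow> dart) \<Rightarrow> dart \<Rightarrow> dart set" where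
  "face_of n rot d = {(face_step n rot ^^ k) d | k. True}"

definition faces :: "nat \<Rightarrow> (dart \<Rightarrow> dart) \<Rightarrow> dart set set" where
  "faces n rot = face_of n rot ` darts n"

definition edge_of :: "nat \<Rightarrow> dart \<Rightarrow> nat" where
  "edge_of n d = (if snd d then fst d else (fst d + 2 * n - 1) mod (2 * n))"

definition knot_diagram ::
  "nat \<Rightarrow> (nat \<Rightarrow> nat) \<Rightarrow> (nat \<Rightarrow> bool) \<Rightarrow> (dart \<Rightarrow> dart) \<Rightarrow> bool" where
  "knot_diagram n cr ov rot \<longleftrightarrow>
     (\<forall>i < 2 * n. cr i < n) \<and>
     (\<forall>c < n. card {i. i < 2 * n \<and> cr i = c} = 2) \<and>
     (\<forall>i < 2 * n. \<forall>j < 2 * n. i \<noteq> j \<and> cr i = cr j \<longrightarrow> ov i \<noteq> ov j) \<and>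
     (\<forall>d \<in> darts n. rot d \<in> darts n \<and> cr (fst (rot d)) = cr (fst d) \<and>
                      rot (rot d) = (fst d, \<not> snd d)) \<and>
     (n = 0 \<or> card (faces n rot) = n + 2)"

text \<open>Position of visit i when travelling from a base point b on edge e
  (b lies between visit e and visit (e+1) mod 2n).\<close>
definition pos_from :: "nat \<Rightarrow> nat \<Rightarrow> nat \<Rightarrow> nat" where
  "pos_from n e i = (i + 2 * n - Suc e) mod (2 * n)"

definition ascending_from :: "nat \<Rightarrow> (nat \<Rightarrow> nat) \<Rightarrow> (nat \<Rightarrow> bool) \<Rightarrow> nat \<Rightarrow> bool" where
  "ascending_from n cr ov e \<longleftrightarrow>
     (\<forall>i < 2 * n. \<forall>j < 2 * n. i \<noteq> j \<and> cr i = cr j \<and> pos_from n e i < pos_from n e j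
        \<longrightarrow> \<not> ov i \<and> ov j)"

text \<open>After moving b to infinity, the bounded faces are those not adjacent to edge e.\<close>
definition bounded_face :: "nat \<Rightarrow> nat \<Rightarrow> dart set \<Rightarrow> bool" where
  "bounded_face n e F \<longleftrightarrow> (\<forall>d \<in> F. edge_of n d \<noteq> e)"

definition over_edge :: "nat \<Rightarrow> (nat \<Rightarrow> bool) \<Rightarrow> nat \<Rightarrow> bool" where
  "over_edge n ov k \<longleftrightarrow> ov k \<and> ov ((k + 1) mod (2 * n))"

definition admits_R1 :: "nat \<Rightarrow> (dart \<Rightarrow> dart) \<Rightarrow> dart set \<Rightarrow> bool" where
  "admits_R1 n rot F \<longleftrightarrow> card F = 1 \<and> (\<exists>d \<in> F. face_step n rot d = d)"

definition admits_R2 :: "nat \<Rightarrow> (nat \<Rightarrow> bool) \<Rightarrow> dart set \<Rightarrow> bool" where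
  "admits_R2 n ov F \<longleftrightarrow> card F = 2 \<and> (\<exists>d \<in> F. over_edge n ov (edge_of n d))"

definition admits_R3 :: "nat \<Rightarrow> (nat \<Rightarrow> bool) \<Rightarrow> dart set \<Rightarrow> bool" where
  "admits_R3 n ov F \<longleftrightarrow> card F = 3 \<and> (\<exists>d \<in> F. over_edge n ov (edge_of n d))"

end

theory Submission
  imports Defs
begin

(* Let k be the edge of a bounded face F that comes last when travelling from the base point,
   and b its end.  Every corner of F is a visit at most one step past k, i.e. not later than b.
   The boundary of a face turns at each corner onto the other strand of the crossing, so both
   visits of a crossing at a corner of F are corners of F.  Hence the other visit at the crossing
   of b comes earlier, and so does the other visit at the crossing of k unless it is b itself,
   i.e. unless k is a loop; ascendingness then makes k the over-strand at both of its ends.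
   A loop edge bounds a monogon on one side, and on its other side the face continues along
   the later edge b, so loops only occur as the boundary of 1-gons. *)

lemma funpow_orbit_closed:
  "y \<in> {(f ^^ k) x | k. True} \<Longrightarrow> f y \<in> {(f ^^ k) x | k. True}"
  by (auto intro: exI[of _ "Suc _"])

lemma funpow_orbit_self: "x \<in> {(f ^^ k) x | k. True}"
proof -
  have "x = (f ^^ 0) x" by simp
  then show ?thesis by blast
qed

lemma funpow_orbit_subset:
  assumes "f ` A \<subseteq> A" "x \<in> A"
  shows "{(f ^^ k) x | k. True} \<subseteq> A"
proof -
  have "(f ^^ k) x \<in> A" for k
    by (induction k) (use assms in auto)
  then show ?thesis by blast
qed

lemma funpow_orbit_image_eq:
  assumes "finite A" "f ` A \<subseteq> A" "inj_on f A" "x \<in> A"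
  shows "f ` {(f ^^ k) x | k. True} = {(f ^^ k) x | k. True}"
proof (rule endo_inj_surj)
  have sub: "{(f ^^ k) x | k. True} \<subseteq> A"
    using funpow_orbit_subset[OF assms(2,4)] .
  show "finite {(f ^^ k) x | k. True}"
    using finite_subset[OF sub assms(1)] .
  show "inj_on f {(f ^^ k) x | k. True}"
    using inj_on_subset[OF assms(3) sub] .
  show "f ` {(f ^^ k) x | k. True} \<subseteq> {(f ^^ k) x | k. True}"
    by (rule image_subsetI) (rule funpow_orbit_closed)
qed

lemma funpow_orbit_fixpoint:
  assumes "f ` A \<subseteq> A" "inj_on f A" "x \<in> A"
    and "y \<in> {(f ^^ k) x | k. True}" "f y = y"
  shows "{(f ^^ k) x | k. True} = {y}"
proof -
  have "y \<in> A"
    using funpow_orbit_subset[OF assms(1,3)] assms(4) by blast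
  have "x = y"
  proof (rule ccontr)
    assume "x \<noteq> y"
    have "(f ^^ k) x \<in> A - {y}" for k
    proof (induction k)
      case (Suc k)
      then have "f ((f ^^ k) x) \<noteq> f y"
        using inj_onD[OF assms(2)] \<open>y \<in> A\<close> by blast
      then show ?case using Suc assms(1,5) by auto
    qed (use \<open>x \<noteq> y\<close> assms(3) in auto)
    then show False using assms(4) by auto
  qed
  moreover have "(f ^^ k) y = y" for k
    by (induction k) (use assms(5) in auto)
  ultimately show ?thesis by auto
qed

lemma pos_from_eq:
  assumes "i < 2 * n" "e < 2 * n"
  shows "pos_from n e i = (if e < i then i - Suc e else i + 2 * n - Suc e)"
proof (cases "e < i")
  case True
  then have "i + 2 * n - Suc e = (i - Suc e) + 2 * n" by simp
  then have "pos_from n e i = (i - Suc e) mod (2 * n)"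
    unfolding pos_from_def by simp
  then show ?thesis using True assms by simp
qed (use assms in \<open>simp add: pos_from_def\<close>)

lemma pos_from_inj_on:
  assumes "e < 2 * n"
  shows "inj_on (pos_from n e) {..<2 * n}"
proof (rule inj_onI)
  fix i j assume "i \<in> {..<2 * n}" "j \<in> {..<2 * n}" "pos_from n e i = pos_from n e j"
  then show "i = j"
    using assms pos_from_eq[of i n e] pos_from_eq[of j n e]
    by (cases "e < i"; cases "e < j"; simp; linarith)
qed

lemma pos_from_Suc_mod:
  assumes "k < 2 * n" "e < 2 * n" "k \<noteq> e"
  shows "pos_from n e (Suc k mod (2 * n)) = Suc (pos_from n e k)"
  using assms pos_from_eq[of k n e] pos_from_eq[of "Suc k mod (2 * n)" n e]
  by (cases "Suc k = 2 * n") auto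

lemma pos_from_less: "e < 2 * n \<Longrightarrow> pos_from n e i < 2 * n"
  unfolding pos_from_def by simp

lemma Suc_mod_pred_mod:
  fixes i m :: nat
  assumes "i < m"
  shows "Suc ((i + m - 1) mod m) mod m = i"
  using assms by (cases i) (auto simp: mod_Suc)

lemma pred_mod_Suc_mod:
  fixes i m :: nat
  assumes "i < m"
  shows "(Suc i mod m + m - 1) mod m = i"
  using assms by (cases "Suc i = m") auto

lemma finite_darts: "finite (darts n)"
proof -
  have "darts n = {..<2 * n} \<times> UNIV" unfolding darts_def by auto
  then show ?thesis by simp
qed

lemma darts_nonempty_pos: "d \<in> darts n \<Longrightarrow> 0 < n"
  unfolding darts_def by auto

lemma opp_in_darts: "0 < n \<Longrightarrow> opp n d \<in> darts n"
  unfolding opp_def darts_def by auto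

lemma opp_True: "opp n (k, True) = (Suc k mod (2 * n), False)"
  unfolding opp_def by simp

lemma opp_Suc_mod_False: "k < 2 * n \<Longrightarrow> opp n (Suc k mod (2 * n), False) = (k, True)"
  using pred_mod_Suc_mod[of k "2 * n"] unfolding opp_def by simp

lemma edge_of_Suc_mod_False: "k < 2 * n \<Longrightarrow> edge_of n (Suc k mod (2 * n), False) = k"
  using pred_mod_Suc_mod[of k "2 * n"] unfolding edge_of_def by simp

lemma edge_of_less: "d \<in> darts n \<Longrightarrow> edge_of n d < 2 * n"
  unfolding edge_of_def darts_def by auto

lemma dart_cases_edge_of:
  assumes "d \<in> darts n"
  shows "d = (edge_of n d, True) \<or> d = (Suc (edge_of n d) mod (2 * n), False)"
  using assms Suc_mod_pred_mod[of "fst d" "2 * n"] unfolding darts_def edge_of_def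
  by (cases d) auto

lemma opp_opp: "d \<in> darts n \<Longrightarrow> opp n (opp n d) = d"
  using dart_cases_edge_of edge_of_less opp_True opp_Suc_mod_False by metis

lemma dart_opp_visits:
  assumes "d \<in> darts n"
  shows "{fst d, fst (opp n d)} = {edge_of n d, Suc (edge_of n d) mod (2 * n)}"
  using dart_cases_edge_of[OF assms] edge_of_less[OF assms] opp_True opp_Suc_mod_False
  by (metis fst_conv insert_commute)

definition face_visits :: "nat \<Rightarrow> dart set \<Rightarrow> nat set" where
  "face_visits n F = (\<Union>d\<in>F. {fst d, fst (opp n d)})"

lemma face_visits_iff:
  assumes "F \<subseteq> darts n"
  shows "v \<in> face_visits n F \<longleftrightarrow> (\<exists>d\<in>F. v = edge_of n d \<or> v = Suc (edge_of n d) mod (2 * n))"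
proof -
  have "{fst d, fst (opp n d)} = {edge_of n d, Suc (edge_of n d) mod (2 * n)}" if "d \<in> F" for d
    using dart_opp_visits assms that by blast
  then show ?thesis unfolding face_visits_def by auto
qed

lemma face_visits_less:
  assumes "F \<subseteq> darts n" "v \<in> face_visits n F"
  shows "v < 2 * n"
proof -
  obtain d where "d \<in> F" "v = edge_of n d \<or> v = Suc (edge_of n d) mod (2 * n)"
    using assms face_visits_iff by blast
  moreover have "d \<in> darts n" using \<open>d \<in> F\<close> assms(1) by blast
  ultimately show ?thesis using edge_of_less[of d n] by auto
qed

lemma face_visits_pos_from_le:
  assumes "e < 2 * n" "F \<subseteq> darts n" "bounded_face n e F"
    and "\<forall>d\<in>F. pos_from n e (edge_of n d) \<le> p" "v \<in> face_visits n F"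
  shows "pos_from n e v \<le> Suc p"
proof -
  obtain d where d: "d \<in> F" "v = edge_of n d \<or> v = Suc (edge_of n d) mod (2 * n)"
    using assms(2,5) face_visits_iff by blast
  have "edge_of n d < 2 * n" "edge_of n d \<noteq> e"
    using d(1) assms(2,3) edge_of_less unfolding bounded_face_def by blast+
  then have "pos_from n e (Suc (edge_of n d) mod (2 * n)) = Suc (pos_from n e (edge_of n d))"
    using pos_from_Suc_mod assms(1) by blast
  then show ?thesis
    using d assms(4) by auto
qed

lemma ascending_from_over:
  assumes "ascending_from n cr ov e" "i < 2 * n" "j < 2 * n" "i \<noteq> j" "cr i = cr j"
    and "pos_from n e i < pos_from n e j"
  shows "ov j"
  using assms unfolding ascending_from_def by blast

context
  fixes n :: nat and cr :: "nat \<Rightarrow> nat" and ov :: "nat \<Rightarrow> bool" and rot :: "dart \<Rightarrow> dart"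
  assumes diagram: "knot_diagram n cr ov rot"
begin

lemma rot_in_darts: "d \<in> darts n \<Longrightarrow> rot d \<in> darts n"
  using diagram unfolding knot_diagram_def by blast

lemma cr_fst_rot: "d \<in> darts n \<Longrightarrow> cr (fst (rot d)) = cr (fst d)"
  using diagram unfolding knot_diagram_def by blast

lemma rot_rot: "d \<in> darts n \<Longrightarrow> rot (rot d) = (fst d, \<not> snd d)"
  using diagram unfolding knot_diagram_def by blast

lemma inj_on_rot: "inj_on rot (darts n)"
proof (rule inj_onI)
  fix x y assume "x \<in> darts n" "y \<in> darts n" "rot x = rot y"
  then have "(fst x, \<not> snd x) = (fst y, \<not> snd y)"
    using rot_rot by metis
  then show "x = y" by (simp add: prod_eq_iff)
qed

lemma fst_rot_neq:
  assumes "d \<in> darts n"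
  shows "fst (rot d) \<noteq> fst d"
proof
  assume "fst (rot d) = fst d"
  have "rot d \<noteq> d"
    using rot_rot[OF assms] by (cases d) auto
  moreover have "rot d \<noteq> (fst d, \<not> snd d)"
  proof
    assume "rot d = (fst d, \<not> snd d)"
    then have "rot d = rot (rot d)" using rot_rot[OF assms] by simp
    then show False
      using inj_onD[OF inj_on_rot] rot_in_darts[OF assms] assms \<open>rot d \<noteq> d\<close> by metis
  qed
  ultimately show False
    using \<open>fst (rot d) = fst d\<close> by (cases d; cases "rot d") auto
qed

lemma same_crossing_unique:
  assumes "i < 2 * n" "j < 2 * n" "j' < 2 * n" "cr j = cr i" "cr j' = cr i" "j \<noteq> i" "j' \<noteq> i"
  shows "j = j'"
proof (rule ccontr)
  assume "j \<noteq> j'"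
  let ?S = "{x. x < 2 * n \<and> cr x = cr i}"
  have "card ?S = 2"
    using diagram assms(1) unfolding knot_diagram_def by blast
  moreover have "card {i, j, j'} \<le> card ?S"
    using assms by (intro card_mono) auto
  ultimately show False using \<open>j \<noteq> j'\<close> assms(6,7) by simp
qed

lemma face_step_in_darts: "d \<in> darts n \<Longrightarrow> face_step n rot d \<in> darts n"
  unfolding face_step_def using darts_nonempty_pos opp_in_darts rot_in_darts by blast

lemma inj_on_face_step: "inj_on (face_step n rot) (darts n)"
proof (rule inj_onI)
  fix x y assume "x \<in> darts n" "y \<in> darts n" "face_step n rot x = face_step n rot y"
  moreover have "0 < n" using \<open>x \<in> darts n\<close> by (rule darts_nonempty_pos)
  ultimately have "opp n x = opp n y"
    using inj_onD[OF inj_on_rot] opp_in_darts unfolding face_step_def by blast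
  then show "x = y" using opp_opp \<open>x \<in> darts n\<close> \<open>y \<in> darts n\<close> by metis
qed

lemma face_subset_darts: "F \<in> faces n rot \<Longrightarrow> F \<subseteq> darts n"
  unfolding faces_def face_of_def
  using funpow_orbit_subset[of "face_step n rot" "darts n"] face_step_in_darts by blast

lemma face_step_image_face:
  assumes "F \<in> faces n rot"
  shows "face_step n rot ` F = F"
proof -
  obtain d where "d \<in> darts n" "F = face_of n rot d"
    using assms unfolding faces_def by blast
  then show ?thesis
    using funpow_orbit_image_eq[OF finite_darts _ inj_on_face_step] face_step_in_darts
    unfolding face_of_def by blast
qed

lemma face_fixpoint:
  assumes "F \<in> faces n rot" "d \<in> F" "face_step n rot d = d"
  shows "F = {d}"
  using assms funpow_orbit_fixpoint[OF _ inj_on_face_step] face_step_in_darts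
  unfolding faces_def face_of_def by blast

lemma face_visit_partner:
  assumes "F \<in> faces n rot" "v \<in> face_visits n F"
  shows "\<exists>u \<in> face_visits n F. u \<noteq> v \<and> cr u = cr v"
proof -
  obtain d where d: "d \<in> F" "v = fst d \<or> v = fst (opp n d)"
    using assms(2) unfolding face_visits_def by blast
  have darts_F: "F \<subseteq> darts n" using face_subset_darts[OF assms(1)] .
  have opp_darts: "opp n d' \<in> darts n" if "d' \<in> F" for d'
    using that darts_F darts_nonempty_pos opp_in_darts by blast
  show ?thesis
  proof (cases "v = fst d")
    case True
    obtain d' where d': "d' \<in> F" "rot (opp n d') = d"
      using face_step_image_face[OF assms(1)] d(1) unfolding face_step_def by force
    then have "fst (opp n d') \<in> face_visits n F"
      unfolding face_visits_def by blast
    then show ?thesis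
      using True d' fst_rot_neq[OF opp_darts] cr_fst_rot[OF opp_darts] by metis
  next
    case False
    have "rot (opp n d) \<in> F"
      using face_step_image_face[OF assms(1)] d(1) unfolding face_step_def by force
    then have "fst (rot (opp n d)) \<in> face_visits n F"
      unfolding face_visits_def by blast
    then show ?thesis
      using False d fst_rot_neq[OF opp_darts] cr_fst_rot[OF opp_darts] by metis
  qed
qed

lemma kink_rot:
  assumes "k < 2 * n" and b: "b = Suc k mod (2 * n)" and "cr b = cr k"
  shows "rot (k, True) = (b, True) \<and> rot (b, False) = (k, True) \<or>
         rot (k, True) = (b, False) \<and> rot (b, True) = (k, True)"
proof -
  have "b < 2 * n" using assms(1) unfolding b by simp
  have "b \<noteq> k"
  proof (cases "Suc k < 2 * n")
    case False
    then have "Suc k = 2 * n" using assms(1) by simp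
    then show ?thesis unfolding b by presburger
  qed (simp add: b)
  have darts: "(k, s) \<in> darts n" "(b, s) \<in> darts n" for s
    using assms(1) \<open>b < 2 * n\<close> unfolding darts_def by auto
  have "fst (rot (k, True)) < 2 * n"
    using rot_in_darts[OF darts(1)] unfolding darts_def by simp
  then have "fst (rot (k, True)) = b"
    using same_crossing_unique[OF assms(1) _ \<open>b < 2 * n\<close>] assms(3) \<open>b \<noteq> k\<close>
      cr_fst_rot[OF darts(1)] fst_rot_neq[OF darts(1)] by simp
  then consider "rot (k, True) = (b, True)" | "rot (k, True) = (b, False)"
    by (cases "rot (k, True)") auto
  then show ?thesis
  proof cases
    case 1
    then have "rot (b, True) = (k, False)" using rot_rot[OF darts(1)[of True]] by simp
    then have "rot (k, False) = (b, False)" using rot_rot[OF darts(2)[of True]] by simp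
    then have "rot (b, False) = (k, True)" using rot_rot[OF darts(1)[of False]] by simp
    with 1 show ?thesis by simp
  next
    case 2
    then have "rot (b, False) = (k, False)" using rot_rot[OF darts(1)[of True]] by simp
    then have "rot (k, False) = (b, True)" using rot_rot[OF darts(2)[of False]] by simp
    then have "rot (b, True) = (k, True)" using rot_rot[OF darts(1)[of False]] by simp
    with 2 show ?thesis by simp
  qed
qed

(* Of the two faces along the loop edge k, one is the monogon inside the kink. *)
lemma kink_face:
  assumes "k < 2 * n" and b: "b = Suc k mod (2 * n)" and "cr b = cr k"
    and F: "F \<in> faces n rot" "card F \<noteq> 1" and kb: "(k, True) \<in> F \<or> (b, False) \<in> F"
  shows "\<exists>d\<in>F. edge_of n d = b"
proof -
  have no_fix: "face_step n rot d \<noteq> d" if "d \<in> F" for d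
    using face_fixpoint[OF F(1) that] F(2) by auto
  have opp_b: "opp n (b, False) = (k, True)"
    using opp_Suc_mod_False[OF assms(1)] b by simp
  have opp_k: "opp n (k, True) = (b, False)"
    using opp_True b by simp
  from kink_rot[OF assms(1-3)] show ?thesis
  proof
    assume rot: "rot (k, True) = (b, True) \<and> rot (b, False) = (k, True)"
    then have "(b, False) \<in> F"
      using kb no_fix[of "(k, True)"] opp_k rot unfolding face_step_def by auto
    then have "(b, True) \<in> F"
      using face_step_image_face[OF F(1)] rot opp_b unfolding face_step_def by force
    then show ?thesis unfolding edge_of_def by force
  next
    assume rot: "rot (k, True) = (b, False) \<and> rot (b, True) = (k, True)"
    then have "(k, True) \<in> F"
      using kb no_fix[of "(b, False)"] opp_b rot unfolding face_step_def by auto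
    then obtain d where d: "d \<in> F" "face_step n rot d = (k, True)"
      using face_step_image_face[OF F(1)] by (metis imageE)
    have "b < 2 * n" using assms(1) b by simp
    then have "opp n (b, True) \<in> darts n" "face_step n rot (opp n (b, True)) = (k, True)"
      using rot opp_in_darts opp_opp[of "(b, True)"] unfolding face_step_def darts_def by auto
    moreover have "d \<in> darts n" using d(1) face_subset_darts[OF F(1)] by blast
    ultimately have "d = opp n (b, True)"
      using inj_onD[OF inj_on_face_step, of d "opp n (b, True)"] d(2) by simp
    then have "edge_of n d = b"
      using edge_of_Suc_mod_False[OF \<open>b < 2 * n\<close>] opp_True by simp
    then show ?thesis using d(1) by blast
  qed
qed

lemma latest_face_visit_over:
  assumes "e < 2 * n" "ascending_from n cr ov e" "F \<in> faces n rot" "v \<in> face_visits n F"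
    and "\<And>u. u \<in> face_visits n F \<Longrightarrow> u \<noteq> v \<Longrightarrow> cr u = cr v \<Longrightarrow>
           pos_from n e u < pos_from n e v"
  shows "ov v"
proof -
  obtain u where u: "u \<in> face_visits n F" "u \<noteq> v" "cr u = cr v"
    using face_visit_partner[OF assms(3,4)] by blast
  have "u < 2 * n" "v < 2 * n"
    using face_visits_less face_subset_darts[OF assms(3)] u(1) assms(4) by blast+
  then show ?thesis
    using ascending_from_over[OF assms(2)] u assms(5) by blast
qed

lemma bounded_face_over_edge:
  assumes e: "e < 2 * n" and asc: "ascending_from n cr ov e"
    and F: "F \<in> faces n rot" "bounded_face n e F" "card F \<noteq> 1"
  shows "\<exists>d\<in>F. over_edge n ov (edge_of n d)"
proof -
  let ?P = "pos_from n e"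
  have darts_F: "F \<subseteq> darts n" using face_subset_darts[OF F(1)] .
  obtain d0 where "d0 \<in> F"
    using F(1) funpow_orbit_self unfolding faces_def face_of_def by blast
  then obtain ds where ds: "ds \<in> F" "\<forall>d\<in>F. ?P (edge_of n d) \<le> ?P (edge_of n ds)"
    using ex_has_greatest_nat[of "\<lambda>d. d \<in> F" d0 "\<lambda>d. ?P (edge_of n d)" "2 * n"]
      pos_from_less[OF e] by blast
  define k where "k = edge_of n ds"
  define b where "b = Suc k mod (2 * n)"
  have k: "k < 2 * n" "k \<noteq> e"
    using ds(1) darts_F F(2) edge_of_less unfolding k_def bounded_face_def by blast+
  have b: "b < 2 * n" "?P b = Suc (?P k)"
    using pos_from_Suc_mod[OF k(1) e k(2)] k(1) unfolding b_def by auto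
  have visits: "k \<in> face_visits n F" "b \<in> face_visits n F"
    using face_visits_iff[OF darts_F] ds(1) unfolding k_def b_def by blast+
  have visit_le: "?P u \<le> ?P b" if "u \<in> face_visits n F" for u
    using face_visits_pos_from_le[OF e darts_F F(2) _ that] ds(2) b(2) unfolding k_def by auto
  have visit_pos_neq: "?P u \<noteq> ?P v" if "u \<in> face_visits n F" "v < 2 * n" "u \<noteq> v" for u v
    using inj_onD[OF pos_from_inj_on[OF e]] face_visits_less[OF darts_F] that by blast
  have "ov b"
    using latest_face_visit_over[OF e asc F(1) visits(2)] visit_le visit_pos_neq b(1)
    by (meson le_neq_implies_less)
  moreover have "ov k"
  proof (rule latest_face_visit_over[OF e asc F(1) visits(1)])
    fix u assume u: "u \<in> face_visits n F" "u \<noteq> k" "cr u = cr k"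
    show "?P u < ?P k"
    proof (rule ccontr)
      assume "\<not> ?P u < ?P k"
      \<comment> \<open>then the partner of k is b, so k is a loop\<close>
      then have "?P u = ?P b"
        using visit_le[OF u(1)] b(2) visit_pos_neq[OF u(1) k(1) u(2)] by linarith
      then have "cr b = cr k"
        using inj_onD[OF pos_from_inj_on[OF e]] face_visits_less[OF darts_F u(1)] b(1) u(3) by auto
      moreover have "ds = (k, True) \<or> ds = (b, False)"
        using dart_cases_edge_of ds(1) darts_F unfolding k_def b_def by blast
      ultimately obtain d where "d \<in> F" "edge_of n d = b"
        using kink_face[OF k(1) b_def _ F(1,3)] ds(1) by blast
      then show False using ds(2) b(2) unfolding k_def by fastforce
    qed
  qed
  ultimately show ?thesis
    using ds(1) unfolding over_edge_def k_def b_def by auto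
qed

end

theorem lemma5p7:
  fixes n :: nat and cr :: "nat \<Rightarrow> nat" and ov :: "nat \<Rightarrow> bool"
    and rot :: "dart \<Rightarrow> dart" and e :: nat
  assumes "knot_diagram n cr ov rot"
    and "e < 2 * n"
    and "ascending_from n cr ov e"
  shows "\<forall>F \<in> faces n rot. bounded_face n e F \<longrightarrow>
           (card F = 1 \<longrightarrow> admits_R1 n rot F) \<and>
           (card F = 2 \<longrightarrow> admits_R2 n ov F) \<and>
           (card F = 3 \<longrightarrow> admits_R3 n ov F)"
proof (intro ballI impI conjI)
  fix F assume F: "F \<in> faces n rot" "bounded_face n e F"
  show "admits_R1 n rot F" if "card F = 1"
  proof -
    obtain d where "F = {d}" using \<open>card F = 1\<close> card_1_singletonE by blast
    then have "face_step n rot d = d"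
      using face_step_image_face[OF assms(1) F(1)] by auto
    then show ?thesis unfolding admits_R1_def using \<open>card F = 1\<close> \<open>F = {d}\<close> by blast
  qed
  show "admits_R2 n ov F" if "card F = 2"
    using bounded_face_over_edge[OF assms F] that unfolding admits_R2_def by simp
  show "admits_R3 n ov F" if "card F = 3"
    using bounded_face_over_edge[OF assms F] that unfolding admits_R3_def by simp
qed

end
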